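(* Let $P\in\mathbb{C}[z_1,\dots,z_d]$ be a polynomial of total degree $k\ge1$. Then \[ \lim_{s\to\infty}\sqrt[s]{\|P^s\|_a}=\infty . \]
   Context: For multi-indices $\alpha\in\mathbb{N}^d$ write $z^\alpha=z_1^{\alpha_1}\cdots z_d^{\alpha_d}$ and $\alpha!=\alpha_1!\cdots\alpha_d!$. The apolar inner product on $\mathbb{C}[z_1,\dots,z_d]$ is $\langle \sum c_\alpha z^\alpha,\sum d_\alpha z^\alpha\rangle_a=\sum_\alpha\alpha!\,c_\alpha\overline{d_\alpha}$, with norm $\|P\|_a=\sqrt{\langle P,P\rangle_a}$. The total degree is the largest $|\alpha|=\alpha_1+\cdots+\alpha_d$ with nonzero coefficient. *)

theory Defs
  imports "HOL-Analysis.Analysis" "HOL-Library.Poly_Mapping"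
begin

text \<open>A polynomial in the variables z_i (i ranging over the finite type 'd, i.e. d variables)
  with complex coefficients is a finitely supported map from multi-indices
  (finitely supported maps 'd to nat) to complex numbers; multiplication is
  the convolution product provided by Poly_Mapping.\<close>

type_synonym 'd cpoly = "('d \<Rightarrow>\<^sub>0 nat) \<Rightarrow>\<^sub>0 complex"

definition mi_abs :: "('d \<Rightarrow>\<^sub>0 nat) \<Rightarrow> nat" where
  "mi_abs \<alpha> = (\<Sum>i\<in>Poly_Mapping.keys \<alpha>. Poly_Mapping.lookup \<alpha> i)"

definition mi_fact :: "('d \<Rightarrow>\<^sub>0 nat) \<Rightarrow> nat" where
  "mi_fact \<alpha> = (\<Prod>i\<in>Poly_Mapping.keys \<alpha>. fact (Poly_Mapping.lookup \<alpha> i))"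

definition total_degree :: "'d cpoly \<Rightarrow> nat" where
  "total_degree P = Max (insert 0 (mi_abs ` Poly_Mapping.keys P))"

definition apolar_inner :: "'d cpoly \<Rightarrow> 'd cpoly \<Rightarrow> complex" where
  "apolar_inner P Q = (\<Sum>\<alpha>\<in>Poly_Mapping.keys P \<union> Poly_Mapping.keys Q.
      of_nat (mi_fact \<alpha>) * Poly_Mapping.lookup P \<alpha> * cnj (Poly_Mapping.lookup Q \<alpha>))"

definition apolar_norm :: "'d cpoly \<Rightarrow> real" where
  "apolar_norm P = sqrt (Re (apolar_inner P P))"

end

theory Submission
  imports Defs
begin

text \<open>Give multi-indices an additive weight that separates the monomials of \<open>P\<close> (read the
  exponents as digits in a large base). The heaviest monomial \<open>z\<^sup>\<alpha>\<close> of \<open>P\<close>, with coefficient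
  \<open>c \<noteq> 0\<close> and \<open>\<alpha> \<noteq> 0\<close>, cannot cancel in \<open>P\<^sup>s\<close>: the coefficient of \<open>z\<^sup>s\<^sup>\<alpha>\<close> in \<open>P\<^sup>s\<close> is \<open>c\<^sup>s\<close>.
  As some exponent of \<open>s\<alpha>\<close> is at least \<open>s\<close>, we get \<open>\<parallel>P\<^sup>s\<parallel>\<^sub>a \<ge> \<surd>(s!) \<bar>c\<bar>\<^sup>s\<close>, whose \<open>s\<close>-th
  root tends to infinity.\<close>

text \<open>\<open>a\<close> need not be a key of \<open>p\<close>, so that the notion passes to products before one knows
  that the top coefficient survives.\<close>

definition top_monomial :: "('a \<Rightarrow> 'w::ord) \<Rightarrow> ('a \<Rightarrow>\<^sub>0 'b::zero) \<Rightarrow> 'a \<Rightarrow> bool" where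
  "top_monomial \<phi> p a \<longleftrightarrow> (\<forall>x\<in>Poly_Mapping.keys p. \<phi> x \<le> \<phi> a \<and> (\<phi> x = \<phi> a \<longrightarrow> x = a))"

context
  fixes \<phi> :: "'a::cancel_comm_monoid_add \<Rightarrow> 'w::ordered_cancel_comm_monoid_add"
  assumes \<phi>_add: "\<And>x y. \<phi> (x + y) = \<phi> x + \<phi> y"
begin

lemma top_monomial_one: "top_monomial \<phi> (1 :: 'a \<Rightarrow>\<^sub>0 'b::zero_neq_one) 0"
proof -
  have "\<phi> 0 + \<phi> 0 = \<phi> 0 + 0" using \<phi>_add[of 0 0] by simp
  then show ?thesis by (simp add: top_monomial_def)
qed

lemma top_monomial_add_eqD:
  assumes "top_monomial \<phi> p a" "top_monomial \<phi> q b"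
    and "x \<in> Poly_Mapping.keys p" "y \<in> Poly_Mapping.keys q" "\<phi> (x + y) = \<phi> (a + b)"
  shows "x = a" "y = b"
proof -
  have le: "\<phi> x \<le> \<phi> a" "\<phi> y \<le> \<phi> b" using assms unfolding top_monomial_def by auto
  have "\<phi> x = \<phi> a"
  proof (rule ccontr)
    assume "\<phi> x \<noteq> \<phi> a"
    then have "\<phi> x + \<phi> y < \<phi> a + \<phi> b" using le by (simp add: add_less_le_mono)
    then show False using assms(5) by (simp add: \<phi>_add)
  qed
  then show "x = a" using assms(1,3) unfolding top_monomial_def by blast
  then have "\<phi> y = \<phi> b" using assms(5) by (simp add: \<phi>_add)
  then show "y = b" using assms(2,4) unfolding top_monomial_def by blast
qed

lemma top_monomial_mult:
  fixes p q :: "'a \<Rightarrow>\<^sub>0 'b::comm_semiring_0"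
  assumes "top_monomial \<phi> p a" "top_monomial \<phi> q b"
  shows "top_monomial \<phi> (p * q) (a + b)"
    and "Poly_Mapping.lookup (p * q) (a + b) = Poly_Mapping.lookup p a * Poly_Mapping.lookup q b"
proof -
  show "top_monomial \<phi> (p * q) (a + b)"
    unfolding top_monomial_def
  proof
    fix z assume "z \<in> Poly_Mapping.keys (p * q)"
    then obtain x y where xy: "x \<in> Poly_Mapping.keys p" "y \<in> Poly_Mapping.keys q" "z = x + y"
      using keys_mult by blast
    then have "\<phi> x \<le> \<phi> a" "\<phi> y \<le> \<phi> b" using assms unfolding top_monomial_def by auto
    then show "\<phi> z \<le> \<phi> (a + b) \<and> (\<phi> z = \<phi> (a + b) \<longrightarrow> z = a + b)"
      using xy top_monomial_add_eqD[OF assms xy(1,2)] by (auto simp: \<phi>_add intro: add_mono)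
  qed
  have summand: "Poly_Mapping.lookup p x * Sum_any (\<lambda>y. Poly_Mapping.lookup q y when a + b = x + y)
      = (Poly_Mapping.lookup p a * Poly_Mapping.lookup q b when x = a)" for x
  proof (cases "x = a")
    case True
    then show ?thesis by simp
  next
    case False
    have "(Poly_Mapping.lookup q y when a + b = x + y) = 0" if "x \<in> Poly_Mapping.keys p" for y
      using top_monomial_add_eqD[OF assms that, of y] False
      by (cases "y \<in> Poly_Mapping.keys q") (auto simp: in_keys_iff when_def)
    then show ?thesis using False by (cases "x \<in> Poly_Mapping.keys p") (auto simp: in_keys_iff)
  qed
  show "Poly_Mapping.lookup (p * q) (a + b) = Poly_Mapping.lookup p a * Poly_Mapping.lookup q b"
    by (simp add: lookup_mult summand)
qed

lemma top_monomial_power: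
  fixes p :: "'a \<Rightarrow>\<^sub>0 'b::comm_semiring_1"
  assumes "top_monomial \<phi> p a"
  shows "top_monomial \<phi> (p ^ n) (\<Sum>_<n. a)"
    and "Poly_Mapping.lookup (p ^ n) (\<Sum>_<n. a) = Poly_Mapping.lookup p a ^ n"
proof -
  have "top_monomial \<phi> (p ^ n) (\<Sum>_<n. a) \<and> Poly_Mapping.lookup (p ^ n) (\<Sum>_<n. a) = Poly_Mapping.lookup p a ^ n"
  proof (induction n)
    case 0
    then show ?case using top_monomial_one by simp
  next
    case (Suc n)
    then show ?case
      using top_monomial_mult[OF assms, of "p ^ n" "\<Sum>_<n. a"] by (simp add: add.commute)
  qed
  then show "top_monomial \<phi> (p ^ n) (\<Sum>_<n. a)" "Poly_Mapping.lookup (p ^ n) (\<Sum>_<n. a) = Poly_Mapping.lookup p a ^ n"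
    by auto
qed

end

lemma base_expansion_inj:
  fixes x y :: "nat \<Rightarrow> nat"
  assumes "\<forall>t<n. x t < B" "\<forall>t<n. y t < B" "(\<Sum>t<n. B ^ t * x t) = (\<Sum>t<n. B ^ t * y t)"
  shows "\<forall>t<n. x t = y t"
  using assms
proof (induction n arbitrary: x y)
  case 0
  then show ?case by simp
next
  case (Suc n)
  have expand: "(\<Sum>t<Suc n. B ^ t * z t) = z 0 + B * (\<Sum>t<n. B ^ t * z (Suc t))" for z :: "nat \<Rightarrow> nat"
    by (simp only: sum.lessThan_Suc_shift sum_distrib_left) (simp add: ac_simps)
  let ?X = "\<Sum>t<n. B ^ t * x (Suc t)" and ?Y = "\<Sum>t<n. B ^ t * y (Suc t)"
  have eq: "x 0 + B * ?X = y 0 + B * ?Y" using Suc.prems(3) expand[of x] expand[of y] by simp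
  have digits0: "x 0 < B" "y 0 < B" using Suc.prems by auto
  have head: "x 0 = y 0" using arg_cong[OF eq, of "\<lambda>m. m mod B"] digits0 by simp
  have "?X = ?Y" using arg_cong[OF eq, of "\<lambda>m. m div B"] digits0 by simp
  then have tail: "\<forall>t<n. x (Suc t) = y (Suc t)"
    by (intro Suc.IH) (use Suc.prems in auto)
  show ?case
  proof (intro allI impI)
    fix t assume "t < Suc n"
    then show "x t = y t" using head tail by (cases t) auto
  qed
qed

lemma ex_additive_weight_inj_on:
  fixes A :: "('d::finite \<Rightarrow>\<^sub>0 nat) set"
  assumes "finite A"
  obtains \<phi> :: "('d \<Rightarrow>\<^sub>0 nat) \<Rightarrow> nat"
  where "\<And>x y. \<phi> (x + y) = \<phi> x + \<phi> y" "inj_on \<phi> A" "\<And>x. x \<noteq> 0 \<Longrightarrow> 0 < \<phi> x"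
proof -
  define n where "n = card (UNIV :: 'd set)"
  obtain h where "bij_betw h {0..<n} (UNIV :: 'd set)"
    using ex_bij_betw_nat_finite[of "UNIV :: 'd set"] unfolding n_def by auto
  then have h_surj: "\<exists>t<n. h t = i" for i
    unfolding bij_betw_def by (metis UNIV_I atLeastLessThan_iff imageE)
  define B where "B = Suc (\<Sum>\<alpha>\<in>A. \<Sum>i\<in>UNIV. Poly_Mapping.lookup \<alpha> i)"
  define \<phi> where "\<phi> \<alpha> = (\<Sum>t<n. B ^ t * Poly_Mapping.lookup \<alpha> (h t))" for \<alpha> :: "'d \<Rightarrow>\<^sub>0 nat"
  have "\<phi> (x + y) = \<phi> x + \<phi> y" for x y
    by (simp add: \<phi>_def lookup_add distrib_left sum.distrib)
  moreover have "inj_on \<phi> A"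
  proof (rule inj_onI)
    fix \<alpha> \<beta> assume in_A: "\<alpha> \<in> A" "\<beta> \<in> A" and "\<phi> \<alpha> = \<phi> \<beta>"
    have digit: "Poly_Mapping.lookup \<gamma> i < B" if "\<gamma> \<in> A" for \<gamma> i
    proof -
      have "Poly_Mapping.lookup \<gamma> i \<le> (\<Sum>i\<in>UNIV. Poly_Mapping.lookup \<gamma> i)"
        by (intro member_le_sum) auto
      also have "\<dots> \<le> (\<Sum>\<alpha>\<in>A. \<Sum>i\<in>UNIV. Poly_Mapping.lookup \<alpha> i)"
        using that assms by (intro member_le_sum) auto
      finally show ?thesis unfolding B_def by simp
    qed
    have "\<forall>t<n. Poly_Mapping.lookup \<alpha> (h t) = Poly_Mapping.lookup \<beta> (h t)"
      by (rule base_expansion_inj[of n _ B])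
        (use digit in_A \<open>\<phi> \<alpha> = \<phi> \<beta>\<close> in \<open>auto simp: \<phi>_def\<close>)
    then have "Poly_Mapping.lookup \<alpha> i = Poly_Mapping.lookup \<beta> i" for i
      using h_surj[of i] by blast
    then show "\<alpha> = \<beta>"
      by (rule poly_mapping_eqI)
  qed
  moreover have "0 < \<phi> \<alpha>" if nonzero: "\<alpha> \<noteq> 0" for \<alpha>
  proof -
    obtain i where "Poly_Mapping.lookup \<alpha> i \<noteq> 0"
      using nonzero lookup_zero poly_mapping_eqI by metis
    moreover obtain t where t: "t < n" "h t = i" using h_surj by blast
    ultimately have "0 < B ^ t * Poly_Mapping.lookup \<alpha> (h t)" unfolding B_def by simp
    also have "\<dots> \<le> \<phi> \<alpha>" unfolding \<phi>_def using t by (intro member_le_sum) auto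
    finally show ?thesis .
  qed
  ultimately show ?thesis by (rule that)
qed

lemma ex_top_monomial:
  fixes P :: "'a \<Rightarrow>\<^sub>0 'b::zero" and \<phi> :: "'a \<Rightarrow> 'w::linorder"
  assumes "inj_on \<phi> (Poly_Mapping.keys P)" "P \<noteq> 0"
  obtains \<alpha> where "\<alpha> \<in> Poly_Mapping.keys P" "top_monomial \<phi> P \<alpha>"
proof -
  have "Max (\<phi> ` Poly_Mapping.keys P) \<in> \<phi> ` Poly_Mapping.keys P"
    using assms(2) by (intro Max_in) auto
  then obtain \<alpha> where \<alpha>: "\<alpha> \<in> Poly_Mapping.keys P" "\<phi> \<alpha> = Max (\<phi> ` Poly_Mapping.keys P)"
    by (metis imageE)
  have "\<phi> x \<le> \<phi> \<alpha>" if "x \<in> Poly_Mapping.keys P" for x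
    unfolding \<alpha>(2) using that by (intro Max_ge) auto
  moreover have "x = \<alpha>" if "x \<in> Poly_Mapping.keys P" "\<phi> x = \<phi> \<alpha>" for x
    using inj_onD[OF assms(1)] that \<alpha>(1) by blast
  ultimately have "top_monomial \<phi> P \<alpha>"
    unfolding top_monomial_def by blast
  with \<alpha>(1) show ?thesis by (rule that)
qed

lemma ex_nonzero_key_if_total_degree_pos:
  assumes "0 < total_degree P"
  shows "\<exists>\<alpha>\<in>Poly_Mapping.keys P. \<alpha> \<noteq> 0"
proof (rule ccontr)
  assume "\<not> (\<exists>\<alpha>\<in>Poly_Mapping.keys P. \<alpha> \<noteq> 0)"
  then have "mi_abs ` Poly_Mapping.keys P \<subseteq> {0}"
    by (auto simp: mi_abs_def)
  then have "total_degree P = Max {0}"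
    unfolding total_degree_def by (metis insert_absorb2 subset_singletonD)
  with assms show False by simp
qed

lemma Re_apolar_inner_self:
  "Re (apolar_inner Q Q) = (\<Sum>\<alpha>\<in>Poly_Mapping.keys Q. real (mi_fact \<alpha>) * (cmod (Poly_Mapping.lookup Q \<alpha>))\<^sup>2)"
proof -
  have "Re (of_nat m * z * cnj z) = real m * (cmod z)\<^sup>2" for m and z :: complex
    by (simp add: mult.assoc flip: complex_norm_square)
  then show ?thesis
    unfolding apolar_inner_def by (simp only: Un_absorb Re_sum)
qed

lemma apolar_norm_ge_coeff:
  "sqrt (real (mi_fact \<gamma>)) * cmod (Poly_Mapping.lookup Q \<gamma>) \<le> apolar_norm Q"
proof -
  have "real (mi_fact \<gamma>) * (cmod (Poly_Mapping.lookup Q \<gamma>))\<^sup>2 \<le> Re (apolar_inner Q Q)"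
  proof (cases "\<gamma> \<in> Poly_Mapping.keys Q")
    case True
    then show ?thesis unfolding Re_apolar_inner_self by (intro member_le_sum) auto
  next
    case False
    then show ?thesis unfolding Re_apolar_inner_self by (simp add: in_keys_iff sum_nonneg)
  qed
  then have "sqrt (real (mi_fact \<gamma>) * (cmod (Poly_Mapping.lookup Q \<gamma>))\<^sup>2) \<le> apolar_norm Q"
    unfolding apolar_norm_def by (rule real_sqrt_le_mono)
  then show ?thesis by (simp add: real_sqrt_mult)
qed

lemma fact_lookup_le_mi_fact: "fact (Poly_Mapping.lookup \<alpha> i) \<le> mi_fact \<alpha>"
proof -
  have rest: "1 \<le> (\<Prod>j\<in>Poly_Mapping.keys \<alpha> - {i}. fact (Poly_Mapping.lookup \<alpha> j) :: nat)"
    by (intro prod_ge_1) simp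
  show ?thesis
  proof (cases "i \<in> Poly_Mapping.keys \<alpha>")
    case True
    then show ?thesis
      using rest unfolding mi_fact_def by (simp add: prod.remove)
  next
    case False
    then show ?thesis
      using rest unfolding mi_fact_def by (simp add: in_keys_iff)
  qed
qed

lemma apolar_norm_power_ge:
  fixes P :: "'d cpoly" and \<phi> :: "('d \<Rightarrow>\<^sub>0 nat) \<Rightarrow> 'w::ordered_cancel_comm_monoid_add"
  assumes "\<And>x y. \<phi> (x + y) = \<phi> x + \<phi> y" "top_monomial \<phi> P \<alpha>" "Poly_Mapping.lookup \<alpha> i \<noteq> 0"
  shows "sqrt (fact s) * cmod (Poly_Mapping.lookup P \<alpha>) ^ s \<le> apolar_norm (P ^ s)"
proof -
  let ?\<gamma> = "\<Sum>_<s. \<alpha>"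
  have "fact s \<le> (fact (Poly_Mapping.lookup ?\<gamma> i) :: nat)"
    using assms(3) by (intro fact_mono) (simp add: lookup_sum)
  also have "\<dots> \<le> mi_fact ?\<gamma>" by (rule fact_lookup_le_mi_fact)
  finally have "(fact s :: real) \<le> real (mi_fact ?\<gamma>)"
    by (metis of_nat_fact of_nat_le_iff)
  then have "sqrt (fact s) * cmod (Poly_Mapping.lookup P \<alpha>) ^ s
      \<le> sqrt (real (mi_fact ?\<gamma>)) * cmod (Poly_Mapping.lookup P \<alpha>) ^ s"
    by (intro mult_right_mono real_sqrt_le_mono) simp_all
  also have "\<dots> = sqrt (real (mi_fact ?\<gamma>)) * cmod (Poly_Mapping.lookup (P ^ s) ?\<gamma>)"
    by (simp add: top_monomial_power(2)[OF assms(1,2)] norm_power)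
  also have "\<dots> \<le> apolar_norm (P ^ s)" by (rule apolar_norm_ge_coeff)
  finally show ?thesis .
qed

lemma eventually_power_le_fact: "eventually (\<lambda>n. A ^ n \<le> (fact n :: real)) sequentially"
proof -
  have "(\<lambda>n. inverse (fact n) * A ^ n) \<longlonglongrightarrow> 0"
    by (rule summable_LIMSEQ_zero[OF summable_exp])
  then have "eventually (\<lambda>n. inverse (fact n) * A ^ n < 1) sequentially"
    by (rule order_tendstoD) simp
  then show ?thesis
    by eventually_elim (simp add: field_simps)
qed

lemma filterlim_root_at_top_if_sqrt_fact_le:
  fixes f :: "nat \<Rightarrow> real"
  assumes "0 < c" "\<And>n. sqrt (fact n) * c ^ n \<le> f n"
  shows "filterlim (\<lambda>n. root n (f n)) at_top sequentially"
  unfolding filterlim_at_top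
proof
  fix Z :: real
  define C where "C = max Z 1"
  show "eventually (\<lambda>n. Z \<le> root n (f n)) sequentially"
    using eventually_power_le_fact[of "(C / c)\<^sup>2"] eventually_ge_at_top[of 1]
  proof eventually_elim
    case (elim n)
    have "(C / c) ^ n = sqrt (((C / c)\<^sup>2) ^ n)"
      using \<open>0 < c\<close> by (simp add: C_def real_sqrt_power power_mult_distrib)
    also have "\<dots> \<le> sqrt (fact n)" using elim(1) by simp
    finally have "C ^ n \<le> f n"
      using assms mult_right_mono[of "(C / c) ^ n" "sqrt (fact n)" "c ^ n"]
      by (simp add: power_divide order_trans)
    then have "root n (C ^ n) \<le> root n (f n)"
      using elim(2) by simp
    moreover have "root n (C ^ n) = C"
      using elim(2) by (simp add: C_def real_root_power_cancel)
    ultimately show ?case unfolding C_def by linarith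
  qed
qed

theorem theorem5p2:
  fixes P :: "('d::finite) cpoly"
  assumes "total_degree P \<ge> 1"
  shows "filterlim (\<lambda>s::nat. root s (apolar_norm (P ^ s))) at_top sequentially"
proof -
  have "\<exists>\<beta>\<in>Poly_Mapping.keys P. \<beta> \<noteq> 0"
    using assms by (intro ex_nonzero_key_if_total_degree_pos) simp
  then obtain \<beta> where \<beta>: "\<beta> \<in> Poly_Mapping.keys P" "\<beta> \<noteq> 0" by blast
  obtain \<phi> :: "('d \<Rightarrow>\<^sub>0 nat) \<Rightarrow> nat" where add: "\<And>x y. \<phi> (x + y) = \<phi> x + \<phi> y"
    and inj: "inj_on \<phi> (Poly_Mapping.keys P)" and pos: "\<And>x. x \<noteq> 0 \<Longrightarrow> 0 < \<phi> x"
    using ex_additive_weight_inj_on[OF finite_keys] by blast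
  have "P \<noteq> 0" using \<beta>(1) by auto
  then obtain \<alpha> where \<alpha>: "\<alpha> \<in> Poly_Mapping.keys P" "top_monomial \<phi> P \<alpha>"
    using ex_top_monomial[OF inj] by blast
  have "\<phi> \<beta> \<le> \<phi> \<alpha>" using \<alpha>(2) \<beta>(1) unfolding top_monomial_def by blast
  moreover have "\<phi> 0 = 0" using add[of 0 0] by simp
  ultimately have "\<alpha> \<noteq> 0" using pos[OF \<beta>(2)] by auto
  then obtain i where i: "Poly_Mapping.lookup \<alpha> i \<noteq> 0"
    by (metis lookup_zero poly_mapping_eqI)
  have "0 < cmod (Poly_Mapping.lookup P \<alpha>)" using \<alpha>(1) by (simp add: in_keys_iff)
  then show ?thesis
    by (rule filterlim_root_at_top_if_sqrt_fact_le[OF _ apolar_norm_power_ge[OF add \<alpha>(2) i]])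
qed

end
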